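(* Let $(\vec s_i)_{i\in\mathbb N}$ be a strictly increasing sequence of oriented separations of a graph $G$ and $(P_i)_{i\in\mathbb N}$ a sequence of pre-tangles in $G$ satisfying (IM1) $\overleftarrow{s}_i\in P_i$ and $\vec s_i\in P_{i+1}$ for all $i$, and (IM2) for all $i<j$, every separation of minimal order among $s_i,\dots,s_{j-1}$ efficiently distinguishes $P_i$ and $P_j$. If $(|s_i|)_{i}$ cofinitely exceeds every integer, then there is a strictly increasing function $j:\mathbb N\to\mathbb N$ such that $(|s_{j(i)}|)_{i}$ is strictly increasing and the sequences $(\vec s_{j(i)})_{i}$ and $(P_{j(i)})_{i}$ still satisfy (IM1) and (IM2).
   Context: Notation: $s$ denotes a separation (an unordered pair $\{A,B\}$ of subsets of $V(G)$ with $A\cup B=V(G)$ and no edge between $A\setminus B$ and $B\setminus A$; order $|s|=|A\cap B|$), $\vec s,\overleftarrow{s}$ its two orientations; oriented separations are ordered by $(A,B)\le(C,D)$ iff $A\subseteq C$ and $B\supseteq D$. A set $O$ of oriented separations is consistent if there are no $(A,B),(C,D)\in O$ with $\{A,B\}\ne\{C,D\}$ and $(B,A)\le(C,D)$. A pre-tangle is a consistent set $P$ which, for some $k\in\mathbb N\cup\{\aleph_0\}$, contains exactly one orientation of every separation of order $<k$ and nothing else. A separation distinguishes two pre-tangles if both contain an orientation of it but different ones; efficiently if of minimum order among such. A sequence $(a_i)$ of integers cofinitely exceeds every integer if for every $k\in\mathbb N$ there is $I$ with $a_i\ge k$ for all $i\ge I$. *)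

theory Defs
  imports Main "HOL-Library.Extended_Nat"
begin

definition graph :: "'a set \<Rightarrow> 'a set set \<Rightarrow> bool" where
  "graph V E \<longleftrightarrow> (\<forall>e\<in>E. \<exists>u v. e = {u, v} \<and> u \<noteq> v \<and> u \<in> V \<and> v \<in> V)"

type_synonym 'a osep = "'a set \<times> 'a set"

definition is_sep :: "'a set \<Rightarrow> 'a set set \<Rightarrow> 'a osep \<Rightarrow> bool" where
  "is_sep V E s \<longleftrightarrow> (case s of (A, B) \<Rightarrow>
     A \<union> B = V \<and> (\<forall>x\<in>A - B. \<forall>y\<in>B - A. {x, y} \<notin> E))"

definition inv_sep :: "'a osep \<Rightarrow> 'a osep" where
  "inv_sep s = (case s of (A, B) \<Rightarrow> (B, A))"

definition sep_order :: "'a osep \<Rightarrow> enat" where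
  "sep_order s = (case s of (A, B) \<Rightarrow>
     (if finite (A \<inter> B) then enat (card (A \<inter> B)) else \<infinity>))"

definition sep_le :: "'a osep \<Rightarrow> 'a osep \<Rightarrow> bool" where
  "sep_le s t = (case s of (A, B) \<Rightarrow> case t of (C, D) \<Rightarrow> A \<subseteq> C \<and> D \<subseteq> B)"

definition sep_less :: "'a osep \<Rightarrow> 'a osep \<Rightarrow> bool" where
  "sep_less s t \<longleftrightarrow> sep_le s t \<and> s \<noteq> t"

definition consistent :: "'a osep set \<Rightarrow> bool" where
  "consistent Os \<longleftrightarrow> \<not> (\<exists>A B C D. (A, B) \<in> Os \<and> (C, D) \<in> Os \<and> {A, B} \<noteq> {C, D}
       \<and> sep_le (B, A) (C, D))"

text \<open>Pre-tangle of G: consistent, and for some k \<in> \<nat> \<union> {\<aleph>0} (an enat) contains exactly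
  one orientation of every separation of order < k and nothing else.\<close>
definition pre_tangle :: "'a set \<Rightarrow> 'a set set \<Rightarrow> 'a osep set \<Rightarrow> bool" where
  "pre_tangle V E P \<longleftrightarrow> consistent P \<and> (\<exists>k::enat.
     (\<forall>s\<in>P. is_sep V E s \<and> sep_order s < k) \<and>
     (\<forall>s. is_sep V E s \<and> sep_order s < k \<longrightarrow>
          (s \<in> P \<or> inv_sep s \<in> P) \<and> (s \<in> P \<and> inv_sep s \<in> P \<longrightarrow> s = inv_sep s)))"

definition distinguishes :: "'a osep \<Rightarrow> 'a osep set \<Rightarrow> 'a osep set \<Rightarrow> bool" where
  "distinguishes s P Q \<longleftrightarrow> (\<exists>x\<in>P. \<exists>y\<in>Q. x \<in> {s, inv_sep s} \<and> y \<in> {s, inv_sep s} \<and> x \<noteq> y)"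

definition eff_distinguishes :: "'a set \<Rightarrow> 'a set set \<Rightarrow> 'a osep \<Rightarrow> 'a osep set \<Rightarrow> 'a osep set \<Rightarrow> bool" where
  "eff_distinguishes V E s P Q \<longleftrightarrow> is_sep V E s \<and> distinguishes s P Q \<and>
     (\<forall>t. is_sep V E t \<and> distinguishes t P Q \<longrightarrow> sep_order s \<le> sep_order t)"

definition IM1 :: "(nat \<Rightarrow> 'a osep) \<Rightarrow> (nat \<Rightarrow> 'a osep set) \<Rightarrow> bool" where
  "IM1 s P \<longleftrightarrow> (\<forall>i. inv_sep (s i) \<in> P i \<and> s i \<in> P (Suc i))"

definition IM2 :: "'a set \<Rightarrow> 'a set set \<Rightarrow> (nat \<Rightarrow> 'a osep) \<Rightarrow> (nat \<Rightarrow> 'a osep set) \<Rightarrow> bool" where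
  "IM2 V E s P \<longleftrightarrow> (\<forall>i j. i < j \<longrightarrow> (\<forall>k. i \<le> k \<and> k < j \<and>
     (\<forall>l. i \<le> l \<and> l < j \<longrightarrow> sep_order (s k) \<le> sep_order (s l)) \<longrightarrow>
       eff_distinguishes V E (s k) (P i) (P j)))"

end

theory Submission
  imports Defs "HOL-Library.Infinite_Set"
begin

text \<open>Pass to the indices \<open>n\<close> whose order is smaller than that of every later separation.
  Since the orders tend to infinity there are infinitely many of them, and along them the
  orders increase strictly. A separation of minimal order among a stretch of the subsequence
  is then of minimal order in the corresponding stretch of the original sequence, so (IM2)
  is inherited; and for pre-tangles the second half of (IM1) follows from the first half
  together with (IM2), since \<open>s\<^sub>i\<close> must distinguish \<open>P\<^sub>i\<close> and \<open>P\<^sub>i\<^sub>+\<^sub>1\<close>.\<close>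

lemma pre_tangle_sep_order_finite:
  assumes "pre_tangle V E P" "x \<in> P"
  shows "sep_order x \<noteq> \<infinity>"
proof -
  obtain k where "\<forall>y\<in>P. is_sep V E y \<and> sep_order y < k"
    using assms(1) unfolding pre_tangle_def by blast
  with assms(2) have "sep_order x < k" by blast
  then show ?thesis by (metis enat_ord_simps(6))
qed

lemma pre_tangle_orientation_unique:
  assumes "pre_tangle V E P" "x \<in> P" "inv_sep x \<in> P"
  shows "x = inv_sep x"
proof -
  obtain k where "\<forall>y\<in>P. is_sep V E y \<and> sep_order y < k"
    "\<forall>y. is_sep V E y \<and> sep_order y < k \<longrightarrow>
        (y \<in> P \<and> inv_sep y \<in> P \<longrightarrow> y = inv_sep y)"
    using assms(1) unfolding pre_tangle_def by blast
  then show ?thesis using assms(2,3) by blast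
qed

lemma distinguishes_pre_tangle_orientation:
  assumes "pre_tangle V E P" "inv_sep x \<in> P" "distinguishes x P Q"
  shows "x \<in> Q"
proof -
  obtain u w where uw: "u \<in> P" "w \<in> Q" "u \<in> {x, inv_sep x}" "w \<in> {x, inv_sep x}" "u \<noteq> w"
    using assms(3) unfolding distinguishes_def by blast
  then have "x \<noteq> inv_sep x" by auto
  then have "x \<notin> P" using pre_tangle_orientation_unique[OF assms(1) _ assms(2)] by blast
  with uw show ?thesis by auto
qed

lemma IM1_of_IM2:
  assumes "IM2 V E s P" "\<And>i. pre_tangle V E (P i)" "\<And>i. inv_sep (s i) \<in> P i"
  shows "IM1 s P"
  unfolding IM1_def
proof (intro allI conjI)
  fix i
  have "\<forall>l. i \<le> l \<and> l < Suc i \<longrightarrow> sep_order (s i) \<le> sep_order (s l)"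
    by (auto simp: less_Suc_eq_le dest: antisym)
  then have "eff_distinguishes V E (s i) (P i) (P (Suc i))"
    using assms(1) unfolding IM2_def by blast
  then show "s i \<in> P (Suc i)"
    using distinguishes_pre_tangle_orientation[OF assms(2,3)]
    by (simp add: eff_distinguishes_def)
qed (use assms(3) in blast)

lemma IM2_subseq:
  assumes "IM2 V E s P" "strict_mono j"
    and minimal: "\<And>i l. j i \<le> l \<Longrightarrow> sep_order (s (j i)) \<le> sep_order (s l)"
  shows "IM2 V E (\<lambda>i. s (j i)) (\<lambda>i. P (j i))"
  unfolding IM2_def
proof (intro allI impI)
  fix a b k
  assume "a < b" and k: "a \<le> k \<and> k < b \<and>
    (\<forall>l. a \<le> l \<and> l < b \<longrightarrow> sep_order (s (j k)) \<le> sep_order (s (j l)))"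
  have "j a \<le> j k" "j k < j b" "j a < j b"
    using k \<open>a < b\<close> assms(2) by (auto simp: strict_mono_less_eq strict_mono_less)
  moreover have "sep_order (s (j k)) \<le> sep_order (s l)" if "j a \<le> l" for l
    using k \<open>a < b\<close> minimal[OF that] order_trans by blast
  ultimately show "eff_distinguishes V E (s (j k)) (P (j a)) (P (j b))"
    using assms(1) unfolding IM2_def by blast
qed

lemma infinite_right_records:
  fixes f :: "nat \<Rightarrow> 'b::wellorder"
  assumes "\<And>b. \<forall>\<^sub>F i in sequentially. b < f i"
  shows "infinite {n. \<forall>l>n. f n < f l}"
  unfolding infinite_nat_iff_unbounded_le
proof
  fix N
  define v where "v = (LEAST v. \<exists>l\<ge>N. f l = v)"
  have v_attained: "\<exists>l\<ge>N. f l = v" unfolding v_def by (rule LeastI_ex) blast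
  have v_min: "v \<le> f l" if "l \<ge> N" for l unfolding v_def using that by (blast intro: Least_le)
  define S where "S = {l. l \<ge> N \<and> f l = v}"
  obtain I where "\<forall>i\<ge>I. v < f i" using assms[of v] by (auto simp: eventually_sequentially)
  then have "S \<subseteq> {..<I}" unfolding S_def by (auto simp: not_less[symmetric])
  then have "finite S" by (rule finite_subset) simp
  moreover have "S \<noteq> {}" using v_attained unfolding S_def by blast
  ultimately have max_S: "Max S \<in> S" "\<And>l. l \<in> S \<Longrightarrow> l \<le> Max S" by simp_all
  have "f (Max S) < f l" if "Max S < l" for l
  proof -
    have "l \<ge> N" using max_S(1) that unfolding S_def by simp
    moreover have "l \<notin> S" using max_S(2) that by fastforce
    ultimately show ?thesis using max_S(1) v_min[of l] unfolding S_def by auto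
  qed
  with max_S(1) show "\<exists>n\<ge>N. n \<in> {n. \<forall>l>n. f n < f l}" unfolding S_def by blast
qed

lemma subseq_right_records:
  fixes f :: "nat \<Rightarrow> 'b::wellorder"
  assumes "\<And>b. \<forall>\<^sub>F i in sequentially. b < f i"
  obtains j :: "nat \<Rightarrow> nat" where "strict_mono j" "\<And>i l. j i < l \<Longrightarrow> f (j i) < f l"
proof -
  let ?R = "{n. \<forall>l>n. f n < f l}"
  have "infinite ?R" using assms by (rule infinite_right_records)
  then show ?thesis
    using enumerate_in_set[of ?R] by (intro that[of "enumerate ?R"]) (auto simp: strict_mono_def)
qed

theorem mainTheorem16:
  fixes V :: "'a set" and E :: "'a set set"
    and s :: "nat \<Rightarrow> 'a set \<times> 'a set" and P :: "nat \<Rightarrow> ('a set \<times> 'a set) set"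
  assumes "graph V E"
    and "\<forall>i. is_sep V E (s i)"
    and "\<forall>i j. i < j \<longrightarrow> sep_less (s i) (s j)"
    and "\<forall>i. pre_tangle V E (P i)"
    and "IM1 s P"
    and "IM2 V E s P"
    and "\<forall>k::nat. \<exists>I. \<forall>i\<ge>I. enat k \<le> sep_order (s i)"
  shows "\<exists>j::nat \<Rightarrow> nat. strict_mono j \<and> strict_mono (\<lambda>i. sep_order (s (j i)))
           \<and> IM1 (\<lambda>i. s (j i)) (\<lambda>i. P (j i)) \<and> IM2 V E (\<lambda>i. s (j i)) (\<lambda>i. P (j i))"
proof -
  define order_of where "order_of n = the_enat (sep_order (s n))" for n
  have sep_order_eq: "sep_order (s n) = enat (order_of n)" for n
    using pre_tangle_sep_order_finite[of V E "P (Suc n)" "s n"] assms(4,5)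
    unfolding order_of_def IM1_def by (cases "sep_order (s n)") auto
  have "\<forall>\<^sub>F i in sequentially. b < order_of i" for b
    using assms(7)[rule_format, of "Suc b"]
    by (auto simp: eventually_sequentially sep_order_eq Suc_le_eq)
  then obtain j :: "nat \<Rightarrow> nat"
    where j: "strict_mono j" and right_record: "\<And>i l. j i < l \<Longrightarrow> order_of (j i) < order_of l"
    using subseq_right_records by blast
  have orders_mono: "strict_mono (\<lambda>i. sep_order (s (j i)))"
    using j right_record by (auto simp: strict_mono_def sep_order_eq)
  have IM2_j: "IM2 V E (\<lambda>i. s (j i)) (\<lambda>i. P (j i))"
  proof (rule IM2_subseq[OF assms(6) j])
    show "sep_order (s (j i)) \<le> sep_order (s l)" if "j i \<le> l" for i l
      using right_record[of i l] that by (cases "j i = l") (auto simp: sep_order_eq)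
  qed
  have IM1_j: "IM1 (\<lambda>i. s (j i)) (\<lambda>i. P (j i))"
    using assms(4,5) by (intro IM1_of_IM2[OF IM2_j]) (auto simp: IM1_def)
  show ?thesis by (intro exI[of _ j] conjI j orders_mono IM1_j IM2_j)
qed

end
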